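(* Let $R$ be a ranking profile over $m$ candidates and let $\rhd=x_1,\dots,x_m$ be the ranking chosen by the Ranked Method of Equal Shares. Then for all $i\in\{1,\dots,\lfloor m/4\rfloor\}$, $\rho_i=\frac{m-i}{U(b_1,x_i,\{x_i,\dots,x_m\})}$ and $x_i\in\arg\max_{x\in\{x_i,\dots,x_m\}}U(b_1,x,\{x_i,\dots,x_m\})$.
   Context: Let $C$ be a set of $m$ candidates. A ranking is a strict linear order over $C$; $\mathcal{R}$ denotes the set of all rankings over $C$. A ranking profile is a function $R:\mathcal{R}\to[0,1]$ with $\sum_{\succ}R(\succ)=1$. For a ranking $\succ$ and $x\in X\subseteq C$, $u(\succ,x,X)=|\{y\in X\setminus\{x\}: x\succ y\}|$; for $b:\mathcal{R}\to\mathbb{R}_{\geq0}$, $U(b,x,X)=\sum_{\succ}b(\succ)u(\succ,x,X)$. Ranked Method of Equal Shares: set $X_1=C$, $b_1(\succ)=R(\succ)\binom{m}{2}$. In each round $i\in\{1,\dots,m-2\}$, for each $x\in X_i$ let $\rho_x$ be the smallest $\rho\geq0$ with $\sum_{\succ\in\mathcal{R}}\min\big(\rho\,b_1(\succ)u(\succ,x,X_i),\,b_i(\succ),\,u(\succ,x,X_i)\big)=m-i$ ($\rho_x=\infty$ if none exists); choose $x_i$ minimizing $\rho_x$ (ties broken arbitrarily), set $\rho_i=\rho_{x_i}$, place $x_i$ at position $i$, set $X_{i+1}=X_i\setminus\{x_i\}$ and $b_{i+1}(\succ)=b_i(\succ)-\min(\rho_i b_1(\succ)u(\succ,x_i,X_i),b_i(\succ),u(\succ,x_i,X_i))$.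 The last two candidates are ordered by majority with respect to the remaining budgets $b_{m-1}$. *)

theory Defs
  imports "HOL-Combinatorics.Multiset_Permutations" "HOL-Library.Extended_Real"
begin

text \<open>A ranking over the candidate set C is a list enumerating C without repetition
  (first = most preferred); the set of all rankings is permutations_of_set C.\<close>

definition prefers :: "'a list \<Rightarrow> 'a \<Rightarrow> 'a \<Rightarrow> bool" where
  "prefers r x y \<longleftrightarrow> (\<exists>i j. i < j \<and> j < length r \<and> r ! i = x \<and> r ! j = y)"

definition is_profile :: "'a set \<Rightarrow> ('a list \<Rightarrow> real) \<Rightarrow> bool" where
  "is_profile C R \<longleftrightarrow> (\<forall>r\<in>permutations_of_set C. 0 \<le> R r \<and> R r \<le> 1)
     \<and> (\<Sum>r\<in>permutations_of_set C. R r) = 1"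

definition util :: "'a list \<Rightarrow> 'a \<Rightarrow> 'a set \<Rightarrow> real" where
  "util r x X = real (card {y \<in> X - {x}. prefers r x y})"

definition Util :: "'a set \<Rightarrow> ('a list \<Rightarrow> real) \<Rightarrow> 'a \<Rightarrow> 'a set \<Rightarrow> real" where
  "Util C b x X = (\<Sum>r\<in>permutations_of_set C. b r * util r x X)"

text \<open>rho_x: smallest rho \<ge> 0 such that the payment sum equals k (infinity if none).\<close>
definition rho_of :: "'a set \<Rightarrow> ('a list \<Rightarrow> real) \<Rightarrow> ('a list \<Rightarrow> real) \<Rightarrow> nat \<Rightarrow> 'a set \<Rightarrow> 'a \<Rightarrow> ereal" where
  "rho_of C b1 bi k X y = Inf {ereal \<rho> | \<rho>. \<rho> \<ge> 0 \<and>
     (\<Sum>r\<in>permutations_of_set C. min (\<rho> * b1 r * util r y X) (min (bi r) (util r y X))) = real k}"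

text \<open>payment min(rho * b1 * u, b_i, u), with ereal semantics for rho = infinity
  (infinity * 0 = 0).\<close>
definition pay :: "ereal \<Rightarrow> real \<Rightarrow> real \<Rightarrow> real \<Rightarrow> real" where
  "pay \<rho> b1 bi u = (if \<rho> = \<infinity> then (if b1 * u = 0 then 0 else min bi u)
                     else min (real_of_ereal \<rho> * b1 * u) (min bi u))"

text \<open>A run of the Ranked Method of Equal Shares (with some tie-breaking):
  x i is the candidate at position i (1 \<le> i \<le> m), b i the budgets before round i,
  \<rho> i the value rho_i of round i.\<close>
definition rmes_run :: "'a set \<Rightarrow> ('a list \<Rightarrow> real) \<Rightarrow> (nat \<Rightarrow> 'a)
    \<Rightarrow> (nat \<Rightarrow> 'a list \<Rightarrow> real) \<Rightarrow> (nat \<Rightarrow> ereal) \<Rightarrow> bool" where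
  "rmes_run C R x b \<rho> \<longleftrightarrow>
     (let m = card C in
       inj_on x {1..m} \<and> x ` {1..m} = C \<and>
       (\<forall>r. b 1 r = R r * real (m choose 2)) \<and>
       (\<forall>i\<in>{1..m-2}. let X = C - x ` {1..<i} in
          (\<forall>y\<in>X. \<rho> i \<le> rho_of C (b 1) (b i) (m - i) X y) \<and>
          \<rho> i = rho_of C (b 1) (b i) (m - i) X (x i) \<and>
          (\<forall>r. b (Suc i) r = b i r - pay (\<rho> i) (b 1 r) (b i r) (util r (x i) X))) \<and>
       (m \<ge> 2 \<longrightarrow>
          (\<Sum>r\<in>{r\<in>permutations_of_set C. prefers r (x m) (x (m-1))}. b (m-1) r)
          \<le> (\<Sum>r\<in>{r\<in>permutations_of_set C. prefers r (x (m-1)) (x m)}. b (m-1) r)))"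

end

theory Submission
  imports Defs
begin

text \<open>
  Let \<open>N = m choose 2\<close> be the total initial budget and \<open>k = m - j\<close> in round \<open>j\<close>.
  If every voter still holds at least the fraction \<open>2k/N\<close> of its initial budget, no payment
  in round \<open>j\<close> is capped. Indeed, for a maximiser \<open>y\<close> of \<open>U(b\<^sub>1, -, X)\<close> on the remaining
  set \<open>X\<close> we have \<open>U \<ge> N k / 2\<close> by averaging (for each ranking the utilities over \<open>X\<close> add
  up to \<open>(k+1) choose 2\<close>) and \<open>U \<ge> b\<^sub>1(r) k\<close> for every voter \<open>r\<close> (its favourite in \<open>X\<close> has
  utility \<open>k\<close>), so at rate \<open>\<rho> = k / U\<close> the payment \<open>\<rho> b\<^sub>1(r) u\<close> of each voter exceeds
  neither \<open>u\<close> nor its budget, and the payments add up to \<open>k\<close>. As every feasible rate for a candidate \<open>z\<close> is at least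
  \<open>k / U(b\<^sub>1, z, X)\<close>, the rule picks a maximiser at rate \<open>k / max U\<close>. A voter then pays at most
  \<open>(2/N) b\<^sub>1(r) k \<le> 4 b\<^sub>1(r) / m\<close>, so the budget condition survives the first \<open>m/4\<close> rounds.
\<close>

lemma prefers_nth_iff:
  assumes "distinct r" "i < length r" "j < length r"
  shows "prefers r (r ! i) (r ! j) \<longleftrightarrow> i < j"
  using assms unfolding prefers_def by (auto simp: nth_eq_iff_index_eq)

lemma prefers_iff_not_prefers:
  assumes "distinct r" "y \<in> set r" "z \<in> set r" "y \<noteq> z"
  shows "prefers r y z \<longleftrightarrow> \<not> prefers r z y"
proof -
  obtain i j where "i < length r" "j < length r" "y = r ! i" "z = r ! j"
    using assms(2,3) by (metis in_set_conv_nth)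
  then show ?thesis
    using assms(4) prefers_nth_iff[OF assms(1)] by (metis linorder_neqE_nat not_less_iff_gr_or_eq)
qed

lemma ex_prefers_all:
  assumes "distinct r" "X \<subseteq> set r" "X \<noteq> {}"
  shows "\<exists>y\<in>X. \<forall>z\<in>X - {y}. prefers r y z"
proof -
  define i where "i = (LEAST i. i < length r \<and> r ! i \<in> X)"
  obtain y where "y \<in> X" using assms(3) by blast
  then obtain j where "j < length r" "r ! j = y"
    using assms(2) in_set_conv_nth by (metis subsetD)
  then have "\<exists>i. i < length r \<and> r ! i \<in> X" using \<open>y \<in> X\<close> by blast
  then have i: "i < length r \<and> r ! i \<in> X"
    unfolding i_def by (rule LeastI_ex)
  have "prefers r (r ! i) z" if z: "z \<in> X - {r ! i}" for z
  proof -
    obtain j where j: "j < length r" "r ! j = z"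
      using z assms(2) in_set_conv_nth by (metis DiffD1 subsetD)
    then have "i \<le> j"
      using z unfolding i_def by (intro Least_le) simp
    moreover have "i \<noteq> j" using j z by blast
    ultimately show ?thesis
      using prefers_nth_iff[OF assms(1), of i j] i j by simp
  qed
  with i show ?thesis by blast
qed

lemma sum_card_tournament:
  assumes "finite X" "\<And>a b. a \<in> X \<Longrightarrow> b \<in> X \<Longrightarrow> a \<noteq> b \<Longrightarrow> P a b \<longleftrightarrow> \<not> P b a"
  shows "2 * (\<Sum>a\<in>X. card {b \<in> X - {a}. P a b}) = card X * (card X - 1)"
proof -
  define T where "T = (SIGMA a:X. {b \<in> X - {a}. P a b})"
  have sum_eq: "(\<Sum>a\<in>X. card {b \<in> X - {a}. P a b}) = card T"
    unfolding T_def using assms(1) by simp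
  have "T \<union> T\<inverse> = X \<times> X - Id_on X" "T \<inter> T\<inverse> = {}"
    unfolding T_def using assms(2) by auto
  moreover have "finite T" unfolding T_def using assms(1) by simp
  ultimately have "card T + card (T\<inverse>) = card (X \<times> X - Id_on X)"
    by (metis card_Un_disjoint finite_converse)
  also have "\<dots> = card X * card X - card X"
  proof -
    have "Id_on X = (\<lambda>a. (a, a)) ` X" by auto
    then have "card (Id_on X) = card X" by (simp add: card_image inj_on_def)
    then show ?thesis
      using assms(1) card_Diff_subset[OF _ Id_on_subset_Times, of X]
      by (metis card_cartesian_product finite_SigmaI finite_subset Id_on_subset_Times)
  qed
  finally show ?thesis
    using sum_eq by (simp add: algebra_simps diff_mult_distrib2)
qed

lemma util_nonneg: "0 \<le> util r y X"
  by (simp add: util_def)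

lemma util_le:
  assumes "finite X" "y \<in> X"
  shows "util r y X \<le> real (card X - 1)"
proof -
  have "card {z \<in> X - {y}. prefers r y z} \<le> card (X - {y})"
    using assms(1) by (intro card_mono) auto
  then show ?thesis
    unfolding util_def using assms(2) by (simp add: card_Diff_singleton)
qed

lemma ex_util_eq_card_minus_1:
  assumes "distinct r" "X \<subseteq> set r" "X \<noteq> {}"
  shows "\<exists>y\<in>X. util r y X = real (card X - 1)"
proof -
  obtain y where y: "y \<in> X" "\<forall>z\<in>X - {y}. prefers r y z"
    using ex_prefers_all[OF assms] by blast
  then have "{z \<in> X - {y}. prefers r y z} = X - {y}" by blast
  then have "util r y X = real (card X - 1)"
    unfolding util_def using y(1) by (simp only: card_Diff_singleton)
  with y(1) show ?thesis by blast
qed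

lemma sum_util:
  assumes "distinct r" "X \<subseteq> set r"
  shows "(\<Sum>y\<in>X. util r y X) = real (card X) * (real (card X) - 1) / 2"
proof -
  have "finite X" using assms(2) finite_subset by blast
  then have tournament: "2 * (\<Sum>y\<in>X. card {z \<in> X - {y}. prefers r y z}) = card X * (card X - 1)"
  proof (rule sum_card_tournament)
    fix y z assume "y \<in> X" "z \<in> X" "y \<noteq> z"
    with assms(2) have "y \<in> set r" "z \<in> set r" by auto
    with \<open>y \<noteq> z\<close> show "prefers r y z \<longleftrightarrow> \<not> prefers r z y"
      by (intro prefers_iff_not_prefers[OF assms(1)])
  qed
  have "2 * (\<Sum>y\<in>X. util r y X) = real (2 * (\<Sum>y\<in>X. card {z \<in> X - {y}. prefers r y z}))"
    unfolding util_def by simp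
  also have "\<dots> = real (card X) * real (card X - 1)"
    unfolding tournament by simp
  finally show ?thesis by (cases "card X") auto
qed

lemma sum_Util:
  assumes "X \<subseteq> C"
  shows "(\<Sum>y\<in>X. Util C b y X)
    = (\<Sum>r\<in>permutations_of_set C. b r) * (real (card X) * (real (card X) - 1) / 2)"
proof -
  have "(\<Sum>y\<in>X. Util C b y X) = (\<Sum>r\<in>permutations_of_set C. b r * (\<Sum>y\<in>X. util r y X))"
    unfolding Util_def by (simp add: sum_distrib_left sum.swap[of _ X])
  also have "\<dots> = (\<Sum>r\<in>permutations_of_set C. b r * (real (card X) * (real (card X) - 1) / 2))"
    using assms by (intro sum.cong refl) (simp add: sum_util permutations_of_setD)
  finally show ?thesis by (simp add: sum_distrib_right)
qed

lemma Util_max_ge_average: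
  assumes "X \<subseteq> C" "card X = Suc k" "\<forall>y\<in>X. Util C b y X \<le> Util C b ys X"
  shows "(\<Sum>r\<in>permutations_of_set C. b r) * real k / 2 \<le> Util C b ys X"
proof -
  have "(\<Sum>y\<in>X. Util C b y X) \<le> real (card X) * Util C b ys X"
    using assms(3) sum_bounded_above by fastforce
  then have "real (Suc k) * ((\<Sum>r\<in>permutations_of_set C. b r) * real k / 2)
      \<le> real (Suc k) * Util C b ys X"
    using sum_Util[OF assms(1)] assms(2) by (simp add: algebra_simps)
  then show ?thesis by (rule mult_left_le_imp_le) simp
qed

lemma budget_le_Util_max:
  assumes "\<forall>r\<in>permutations_of_set C. 0 \<le> b r" "r \<in> permutations_of_set C"
    and "X \<subseteq> C" "X \<noteq> {}" "\<forall>y\<in>X. Util C b y X \<le> Util C b ys X"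
  shows "b r * real (card X - 1) \<le> Util C b ys X"
proof -
  obtain y where y: "y \<in> X" "util r y X = real (card X - 1)"
    using ex_util_eq_card_minus_1[of r X] permutations_of_setD[OF assms(2)] assms(3,4) by metis
  have "b r * util r y X \<le> Util C b y X"
    unfolding Util_def using assms(2)
    by (rule member_le_sum) (meson DiffD1 assms(1) mult_nonneg_nonneg util_nonneg, simp)
  with y assms(5) show ?thesis by force
qed

lemma sum_payments_le:
  "(\<Sum>r\<in>permutations_of_set C. min (\<rho> * b1 r * util r y X) (min (bi r) (util r y X)))
    \<le> \<rho> * Util C b1 y X"
  unfolding Util_def sum_distrib_left by (intro sum_mono) (simp add: mult.assoc)

lemma rho_of_ge:
  assumes "Util C b1 y X \<le> M" "0 < M"
  shows "ereal (real k / M) \<le> rho_of C b1 bi k X y"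
  unfolding rho_of_def
proof (rule Inf_greatest, clarify)
  fix \<rho> :: real
  assume "0 \<le> \<rho>"
    and "(\<Sum>r\<in>permutations_of_set C. min (\<rho> * b1 r * util r y X) (min (bi r) (util r y X))) = real k"
  then have "real k \<le> \<rho> * M"
    using sum_payments_le[of \<rho> b1 y X bi C] mult_left_mono[OF assms(1) \<open>0 \<le> \<rho>\<close>] by linarith
  then show "ereal (real k / M) \<le> ereal \<rho>"
    using assms(2) by (simp add: pos_divide_le_eq)
qed

lemma Util_pos_if_rho_of_finite:
  assumes "rho_of C b1 bi k X y \<noteq> \<infinity>" "0 < k"
  shows "0 < Util C b1 y X"
proof -
  define S where "S = {ereal \<rho> | \<rho>. 0 \<le> \<rho> \<and>
    (\<Sum>r\<in>permutations_of_set C. min (\<rho> * b1 r * util r y X) (min (bi r) (util r y X))) = real k}"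
  have "Inf S \<noteq> \<infinity>"
    using assms(1) unfolding rho_of_def S_def .
  then have "S \<noteq> {}"
    by (auto simp: top_ereal_def)
  then obtain \<rho> where \<rho>: "0 \<le> \<rho>"
    "(\<Sum>r\<in>permutations_of_set C. min (\<rho> * b1 r * util r y X) (min (bi r) (util r y X))) = real k"
    unfolding S_def by auto
  then have "real k \<le> \<rho> * Util C b1 y X"
    using sum_payments_le[of \<rho> b1 y X bi C] by linarith
  with \<rho>(1) assms(2) show ?thesis
    by (metis mult_nonneg_nonpos not_le of_nat_0_less_iff order_less_le_trans)
qed

lemma rho_of_le_uncapped:
  assumes "0 \<le> \<rho>" "\<rho> * Util C b1 y X = real k"
    and "\<forall>r\<in>permutations_of_set C. \<rho> * b1 r * util r y X \<le> min (bi r) (util r y X)"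
  shows "rho_of C b1 bi k X y \<le> ereal \<rho>"
proof -
  have "(\<Sum>r\<in>permutations_of_set C. min (\<rho> * b1 r * util r y X) (min (bi r) (util r y X)))
      = \<rho> * Util C b1 y X"
    using assms(3) unfolding Util_def sum_distrib_left by (intro sum.cong) (auto simp: mult.assoc)
  then show ?thesis
    unfolding rho_of_def using assms(1,2) by (intro Inf_lower) auto
qed

lemma rho_of_Util_max_le:
  assumes b1_nonneg: "\<forall>r\<in>permutations_of_set C. 0 \<le> b1 r"
    and N: "(\<Sum>r\<in>permutations_of_set C. b1 r) = N" "0 < N"
    and X: "X \<subseteq> C" "card X = Suc k" "0 < k"
    and budget: "\<forall>r\<in>permutations_of_set C. b1 r * (2 * real k / N) \<le> bi r"
    and ys: "ys \<in> X" "\<forall>y\<in>X. Util C b1 y X \<le> Util C b1 ys X"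
  shows "0 < Util C b1 ys X"
    and "real k / Util C b1 ys X \<le> 2 / N"
    and "rho_of C b1 bi k X ys \<le> ereal (real k / Util C b1 ys X)"
proof -
  let ?U = "Util C b1 ys X"
  have "finite X"
    using X(2) by (intro card_ge_0_finite) simp
  have "N * real k / 2 \<le> ?U"
    using Util_max_ge_average[OF X(1,2) ys(2)] N(1) by simp
  moreover have "0 < N * real k / 2"
    using N(2) X(3) by simp
  ultimately show U_pos: "0 < ?U" by linarith
  have "real k / ?U \<le> real k / (N * real k / 2)"
    using \<open>N * real k / 2 \<le> ?U\<close> \<open>0 < N * real k / 2\<close> by (intro divide_left_mono) auto
  then show rate_le: "real k / ?U \<le> 2 / N"
    using X(3) by simp
  show "rho_of C b1 bi k X ys \<le> ereal (real k / ?U)"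
  proof (rule rho_of_le_uncapped)
    show "0 \<le> real k / ?U" "real k / ?U * ?U = real k"
      using U_pos by simp_all
    show "\<forall>r\<in>permutations_of_set C. real k / ?U * b1 r * util r ys X \<le> min (bi r) (util r ys X)"
    proof
      fix r assume r: "r \<in> permutations_of_set C"
      have u: "0 \<le> util r ys X" "util r ys X \<le> real k"
        using util_nonneg util_le[OF \<open>finite X\<close> ys(1)] X(2) by auto
      have b1r: "0 \<le> b1 r" using b1_nonneg r by blast
      have "b1 r * real k \<le> ?U"
        using budget_le_Util_max[OF b1_nonneg r X(1) _ ys(2)] X(2) ys(1) by auto
      then have "real k / ?U * b1 r \<le> 1"
        using U_pos by (simp add: field_simps)
      then have "real k / ?U * b1 r * util r ys X \<le> util r ys X"
        using u b1r U_pos by (intro mult_left_le_one_le) auto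
      moreover have "real k / ?U * b1 r * util r ys X \<le> 2 / N * b1 r * real k"
        using rate_le U_pos b1r u N(2) by (intro mult_mono mult_right_mono) auto
      moreover have "2 / N * b1 r * real k \<le> bi r"
        using budget r by (simp add: algebra_simps)
      ultimately show "real k / ?U * b1 r * util r ys X \<le> min (bi r) (util r ys X)"
        by simp
    qed
  qed
qed

lemma rmes_round:
  assumes b1_nonneg: "\<forall>r\<in>permutations_of_set C. 0 \<le> b1 r"
    and N: "(\<Sum>r\<in>permutations_of_set C. b1 r) = N" "0 < N"
    and X: "X \<subseteq> C" "card X = Suc k" "0 < k"
    and budget: "\<forall>r\<in>permutations_of_set C. b1 r * (2 * real k / N) \<le> bi r"
    and minimal: "\<forall>y\<in>X. \<rho> \<le> rho_of C b1 bi k X y"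
    and chosen: "\<rho> = rho_of C b1 bi k X x0" "x0 \<in> X"
  shows "\<rho> = ereal (real k / Util C b1 x0 X)"
    and "\<forall>y\<in>X. Util C b1 y X \<le> Util C b1 x0 X"
    and "real k / Util C b1 x0 X \<le> 2 / N"
proof -
  let ?U = "\<lambda>y. Util C b1 y X"
  have "finite X" "X \<noteq> {}"
    using X(2) by (auto intro: card_ge_0_finite)
  then have "Max (?U ` X) \<in> ?U ` X" by simp
  then obtain ys where "ys \<in> X" "?U ys = Max (?U ` X)"
    by auto
  with \<open>finite X\<close> have ys: "ys \<in> X" "\<forall>y\<in>X. ?U y \<le> ?U ys"
    by auto
  note max = rho_of_Util_max_le[OF b1_nonneg N X budget ys]
  have "ereal (real k / ?U ys) \<le> rho_of C b1 bi k X y" if "y \<in> X" for y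
    using ys(2) that max(1) by (intro rho_of_ge) auto
  then have \<rho>_eq: "\<rho> = ereal (real k / ?U ys)"
    using minimal max(3) ys(1) chosen by (meson order.antisym order.trans)
  have Ux0_pos: "0 < ?U x0"
    using chosen \<rho>_eq X(3) by (intro Util_pos_if_rho_of_finite[of C b1 bi k X x0]) auto
  have "ereal (real k / ?U x0) \<le> ereal (real k / ?U ys)"
    using rho_of_ge[of C b1 x0 X "?U x0" k bi] chosen \<rho>_eq Ux0_pos by simp
  then have "real k * ?U ys \<le> real k * ?U x0"
    using Ux0_pos max(1) by (simp add: field_simps)
  then have "?U x0 = ?U ys"
    using X(3) ys(2) chosen(2) by (simp add: order.antisym)
  then show "\<rho> = ereal (real k / ?U x0)" "\<forall>y\<in>X. ?U y \<le> ?U x0" "real k / ?U x0 \<le> 2 / N"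
    using \<rho>_eq ys(2) max(2) by simp_all
qed

lemma real_choose_two: "real (n choose 2) = real n * (real n - 1) / 2"
  by (simp add: binomial_gbinomial gbinomial_Suc numeral_2_eq_2)

lemma choose_two_ratio_le:
  assumes "2 \<le> m" "k < m"
  shows "2 * real k / real (m choose 2) \<le> 4 / real m"
proof -
  have "2 * real k / real (m choose 2) = 4 * real k / (real m * (real m - 1))"
    by (simp add: real_choose_two)
  also have "\<dots> \<le> 4 * (real m - 1) / (real m * (real m - 1))"
    using assms by (intro divide_right_mono) auto
  also have "\<dots> = 4 / real m"
    using assms(1) by (simp add: field_simps)
  finally show ?thesis .
qed

lemma image_atLeastAtMost_diff_prefix:
  assumes "inj_on x {1..m}" "1 \<le> j" "j \<le> Suc m"
  shows "x ` {1..m} - x ` {1..<j} = x ` {j..m}"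
proof -
  have "{1..<j} \<subseteq> {1..m}" using assms(3) by auto
  then have "x ` ({1..m} - {1..<j}) = x ` {1..m} - x ` {1..<j}"
    by (intro inj_on_image_set_diff[OF assms(1)]) auto
  moreover have "{1..m} - {1..<j} = {j..m}" using assms(2) by auto
  ultimately show ?thesis by simp
qed

lemma rmes_runD:
  assumes "rmes_run C R x b \<rho>"
  shows "inj_on x {1..card C}" "x ` {1..card C} = C"
    and "b 1 r = R r * real (card C choose 2)"
    and "j \<in> {1..card C - 2} \<Longrightarrow>
      \<forall>y\<in>x ` {j..card C}. \<rho> j \<le> rho_of C (b 1) (b j) (card C - j) (x ` {j..card C}) y"
    and "j \<in> {1..card C - 2} \<Longrightarrow>
      \<rho> j = rho_of C (b 1) (b j) (card C - j) (x ` {j..card C}) (x j)"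
    and "j \<in> {1..card C - 2} \<Longrightarrow>
      b (Suc j) r = b j r - pay (\<rho> j) (b 1 r) (b j r) (util r (x j) (x ` {j..card C}))"
proof -
  note run = assms[unfolded rmes_run_def Let_def]
  show inj: "inj_on x {1..card C}" and img: "x ` {1..card C} = C"
    and "b 1 r = R r * real (card C choose 2)"
    using run by auto
  assume j: "j \<in> {1..card C - 2}"
  have "\<forall>i\<in>{1..card C - 2}.
      (\<forall>y\<in>C - x ` {1..<i}. \<rho> i \<le> rho_of C (b 1) (b i) (card C - i) (C - x ` {1..<i}) y) \<and>
      \<rho> i = rho_of C (b 1) (b i) (card C - i) (C - x ` {1..<i}) (x i) \<and>
      (\<forall>r. b (Suc i) r = b i r - pay (\<rho> i) (b 1 r) (b i r) (util r (x i) (C - x ` {1..<i})))"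
    using run by (elim conjE)
  then have round:
    "(\<forall>y\<in>C - x ` {1..<j}. \<rho> j \<le> rho_of C (b 1) (b j) (card C - j) (C - x ` {1..<j}) y) \<and>
      \<rho> j = rho_of C (b 1) (b j) (card C - j) (C - x ` {1..<j}) (x j) \<and>
      (\<forall>r. b (Suc j) r = b j r - pay (\<rho> j) (b 1 r) (b j r) (util r (x j) (C - x ` {1..<j})))"
    using j by (rule bspec)
  from j have "1 \<le> j" "j \<le> Suc (card C)" by auto
  then have remaining: "C - x ` {1..<j} = x ` {j..card C}"
    using image_atLeastAtMost_diff_prefix[OF inj] img by metis
  show "\<forall>y\<in>x ` {j..card C}. \<rho> j \<le> rho_of C (b 1) (b j) (card C - j) (x ` {j..card C}) y"
    and "\<rho> j = rho_of C (b 1) (b j) (card C - j) (x ` {j..card C}) (x j)"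
    and "b (Suc j) r = b j r - pay (\<rho> j) (b 1 r) (b j r) (util r (x j) (x ` {j..card C}))"
    using round unfolding remaining by blast+
qed

lemma rmes_run_initial_budget:
  assumes "is_profile C R" "rmes_run C R x b \<rho>"
  shows "\<forall>r\<in>permutations_of_set C. 0 \<le> b 1 r"
    and "(\<Sum>r\<in>permutations_of_set C. b 1 r) = real (card C choose 2)"
  using assms(1) unfolding rmes_runD(3)[OF assms(2)] is_profile_def
  by (simp_all flip: sum_distrib_right)

lemma rmes_run_round:
  assumes "is_profile C R" "rmes_run C R x b \<rho>" "1 \<le> j" "4 * j \<le> card C"
    and budget: "\<forall>r\<in>permutations_of_set C. b 1 r * (4 / real (card C)) \<le> b j r"
  shows "\<rho> j = ereal (real (card C - j) / Util C (b 1) (x j) (x ` {j..card C}))"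
    and "\<forall>y\<in>x ` {j..card C}. Util C (b 1) y (x ` {j..card C}) \<le> Util C (b 1) (x j) (x ` {j..card C})"
    and "\<forall>r\<in>permutations_of_set C. b j r - b 1 r * (4 / real (card C)) \<le> b (Suc j) r"
proof -
  let ?m = "card C" and ?N = "real (card C choose 2)"
  let ?X = "x ` {j..card C}" and ?k = "card C - j"
  note b1 = rmes_run_initial_budget[OF assms(1,2)]
  have j: "j \<in> {1..?m - 2}" using assms(3,4) by auto
  have X: "?X \<subseteq> C" "card ?X = Suc ?k" "0 < ?k"
  proof -
    have "inj_on x {j..?m}"
      using rmes_runD(1)[OF assms(2)] by (rule inj_on_subset) (use assms(3) in auto)
    then show "card ?X = Suc ?k" using j by (auto simp: card_image Suc_diff_le)
    show "?X \<subseteq> C" using rmes_runD(2)[OF assms(2)] assms(3) by auto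
    show "0 < ?k" using j by auto
  qed
  have "2 \<le> ?m" using j by auto
  then have N: "0 < ?N" by (simp add: real_choose_two)
  have ratio: "2 * real ?k / ?N \<le> 4 / real ?m"
    using \<open>2 \<le> ?m\<close> j by (intro choose_two_ratio_le) auto
  have round_budget: "\<forall>r\<in>permutations_of_set C. b 1 r * (2 * real ?k / ?N) \<le> b j r"
    using budget b1(1) ratio by (meson mult_left_mono order_trans)
  have "x j \<in> ?X" using j by auto
  note round = rmes_round[OF b1 N X round_budget rmes_runD(4,5)[OF assms(2) j] this]
  show "\<rho> j = ereal (real ?k / Util C (b 1) (x j) ?X)"
    and "\<forall>y\<in>?X. Util C (b 1) y ?X \<le> Util C (b 1) (x j) ?X"
    using round(1,2) j by auto
  show "\<forall>r\<in>permutations_of_set C. b j r - b 1 r * (4 / real ?m) \<le> b (Suc j) r"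
  proof
    fix r assume r: "r \<in> permutations_of_set C"
    let ?a = "real ?k / Util C (b 1) (x j) ?X"
    have "pay (\<rho> j) (b 1 r) (b j r) (util r (x j) ?X) \<le> ?a * b 1 r * util r (x j) ?X"
      using round(1) j by (simp add: pay_def)
    also have "\<dots> \<le> 2 / ?N * b 1 r * real ?k"
      using round(3) j b1(1) r util_nonneg util_le[of ?X "x j" r] X
      by (intro mult_mono mult_right_mono) auto
    also have "\<dots> = b 1 r * (2 * real ?k / ?N)"
      by simp
    also have "\<dots> \<le> b 1 r * (4 / real ?m)"
      using ratio b1(1) r by (intro mult_left_mono) auto
    finally show "b j r - b 1 r * (4 / real ?m) \<le> b (Suc j) r"
      using rmes_runD(6)[OF assms(2) j, of r] by simp
  qed
qed

lemma rmes_run_budget_ge: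
  assumes "is_profile C R" "rmes_run C R x b \<rho>" "1 \<le> j" "4 * j \<le> card C"
  shows "\<forall>r\<in>permutations_of_set C. b 1 r * (4 / real (card C)) \<le> b j r"
proof -
  let ?m = "card C"
  note b1_nonneg = rmes_run_initial_budget(1)[OF assms(1,2)]
  have threshold: "b 1 r * (4 / real ?m) \<le> b 1 r * (1 - 4 * real n / real ?m)"
    if "r \<in> permutations_of_set C" "4 * Suc n \<le> ?m" for r n
  proof -
    have "4 / real ?m \<le> 1 - 4 * real n / real ?m"
      using that(2) by (simp add: field_simps)
    then show ?thesis using b1_nonneg that(1) by (intro mult_left_mono) auto
  qed
  have "\<forall>r\<in>permutations_of_set C. b 1 r * (1 - 4 * real n / real ?m) \<le> b (Suc n) r"
    if "4 * Suc n \<le> ?m" for n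
    using that
  proof (induction n)
    case 0
    then show ?case by simp
  next
    case (Suc n)
    then have IH: "\<forall>r\<in>permutations_of_set C. b 1 r * (1 - 4 * real n / real ?m) \<le> b (Suc n) r"
      by simp
    have "4 * Suc n \<le> ?m" using Suc.prems by simp
    then have "\<forall>r\<in>permutations_of_set C. b 1 r * (4 / real ?m) \<le> b (Suc n) r"
      using threshold IH by (blast intro: order_trans)
    then have step: "\<forall>r\<in>permutations_of_set C. b (Suc n) r - b 1 r * (4 / real ?m) \<le> b (Suc (Suc n)) r"
      using rmes_run_round(3)[OF assms(1,2), of "Suc n"] Suc.prems by simp
    show ?case
    proof
      fix r assume r: "r \<in> permutations_of_set C"
      have "b 1 r * (1 - 4 * real (Suc n) / real ?m)
          = b 1 r * (1 - 4 * real n / real ?m) - b 1 r * (4 / real ?m)"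
        by (simp add: algebra_simps add_divide_distrib)
      then show "b 1 r * (1 - 4 * real (Suc n) / real ?m) \<le> b (Suc (Suc n)) r"
        using IH step r by fastforce
    qed
  qed
  moreover obtain n where "j = Suc n" using assms(3) by (cases j) auto
  ultimately show ?thesis
    using threshold assms(4) by (blast intro: order_trans)
qed

theorem mainTheorem7:
  fixes C :: "'a set" and R :: "'a list \<Rightarrow> real"
    and x :: "nat \<Rightarrow> 'a" and b :: "nat \<Rightarrow> 'a list \<Rightarrow> real" and \<rho> :: "nat \<Rightarrow> ereal"
  assumes "finite C"
    and "is_profile C R"
    and "rmes_run C R x b \<rho>"
    and "i \<in> {1..card C div 4}"
  shows "\<rho> i = ereal (real (card C - i) / Util C (b 1) (x i) (x ` {i..card C}))
     \<and> x i \<in> x ` {i..card C}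
     \<and> (\<forall>y\<in>x ` {i..card C}. Util C (b 1) y (x ` {i..card C}) \<le> Util C (b 1) (x i) (x ` {i..card C}))"
proof -
  have i: "1 \<le> i" "4 * i \<le> card C" using assms(4) by auto
  note budget = rmes_run_budget_ge[OF assms(2,3) i]
  show ?thesis
    using rmes_run_round(1,2)[OF assms(2,3) i budget] i by auto
qed

end
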